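(* Fix a level $\ell<K$. Let $\tilde{\boldsymbol\theta}\in\mathbb R^{\mathcal Z^*}$ be such that $\boldsymbol\mu=\tilde{\boldsymbol p}(\tilde{\boldsymbol\theta})$ is coherent among all levels $k>\ell$. Then for every $t\in\mathbb R$ and every node $y\in\mathcal Y^*$ with $\mathrm{level}(y)\le\ell$, the vector $\boldsymbol\mu'=\tilde{\boldsymbol p}(\tilde{\boldsymbol\theta}+t\,\mathbf a_y)$ is also coherent among all levels $k>\ell$, where $\mathbf a_y$ denotes the column of $\mathbf A$ indexed by $y$.
   Context: Fix an integer $K\ge1$. Let $T^*$ be the complete binary tree of depth $K$ whose nodes are intervals: the root (level $0$) has $I_{\mathit{root}}=[0,1)$, and each node $z$ at level $k<K$ with $I_z=[\alpha_z,\beta_z)$ has children $\mathrm{left}(z)$, $\mathrm{right}(z)$ at level $k+1$ with intervals $[\alpha_z,\frac{\alpha_z+\beta_z}2)$ and $[\frac{\alpha_z+\beta_z}2,\beta_z)$. Let $\mathcal Z^*$ be its node set, $\mathcal Z_k$ the nodes at level $k$, $\mathrm{level}(z)$ the level of $z$, and $\mathcal Y^*=\mathcal Z^*\setminus\mathcal Z_K$. Fix liquidity parameters $b_k>0$ ($k=0,\dots,K$) and set $B_\ell=\sum_{k=\ell+1}^K b_k$. For $\tilde{\boldsymbol\theta}\in\mathbb R^{\mathcal Z^*}$, $\tilde p_z(\tilde{\boldsymbol\theta})=e^{\tilde\theta_z/b_k}/\sum_{z'\in\mathcal Z_k}e^{\tilde\theta_{z'}/b_k}$ for $z\in\mathcal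 Z_k$. The constraint matrix $\mathbf A\in\mathbb R^{\mathcal Z^*\times\mathcal Y^*}$ has entries $A_{zy}=B_{\mathrm{level}(z)}$ if $z=y$, $-b_{\mathrm{level}(z)}$ if $I_z\subsetneq I_y$, and $0$ otherwise. A vector $\boldsymbol\mu\in\mathbb R^{\mathcal Z^*}$ is coherent among a set $L$ of levels if for all $k,m\in L$ with $k<m$ and all $z\in\mathcal Z_k$, $\mu_z=\sum_{u\in\mathcal Z_m:\ I_u\subseteq I_z}\mu_u$. *)

theory Defs
  imports Complex_Main
begin

text \<open>Nodes of the complete binary tree of depth K are pairs (k, j) with k \<le> K and
  j < 2^k; node (k, j) sits at level k and carries the dyadic interval
  [j/2^k, (j+1)/2^k). This is exactly the interval obtained by the recursive halving
  starting from the root interval [0,1).\<close>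

definition nodes :: "nat \<Rightarrow> (nat \<times> nat) set" where
  "nodes K = {(k, j). k \<le> K \<and> j < 2 ^ k}"

definition level :: "nat \<times> nat \<Rightarrow> nat" where
  "level z = fst z"

definition alpha :: "nat \<times> nat \<Rightarrow> real" where
  "alpha z = real (snd z) / 2 ^ fst z"

definition beta :: "nat \<times> nat \<Rightarrow> real" where
  "beta z = (real (snd z) + 1) / 2 ^ fst z"

definition Ivl :: "nat \<times> nat \<Rightarrow> real set" where
  "Ivl z = {alpha z ..< beta z}"

definition lvl_nodes :: "nat \<Rightarrow> nat \<Rightarrow> (nat \<times> nat) set" where
  "lvl_nodes K k = {z \<in> nodes K. level z = k}"

definition inner_nodes :: "nat \<Rightarrow> (nat \<times> nat) set" where
  "inner_nodes K = nodes K - lvl_nodes K K"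

definition Bsum :: "nat \<Rightarrow> (nat \<Rightarrow> real) \<Rightarrow> nat \<Rightarrow> real" where
  "Bsum K b l = (\<Sum>k = l + 1..K. b k)"

definition ptil :: "nat \<Rightarrow> (nat \<Rightarrow> real) \<Rightarrow> (nat \<times> nat \<Rightarrow> real) \<Rightarrow> nat \<times> nat \<Rightarrow> real" where
  "ptil K b \<theta> z = exp (\<theta> z / b (level z)) /
      (\<Sum>z' \<in> lvl_nodes K (level z). exp (\<theta> z' / b (level z)))"

definition Amat :: "nat \<Rightarrow> (nat \<Rightarrow> real) \<Rightarrow> nat \<times> nat \<Rightarrow> nat \<times> nat \<Rightarrow> real" where
  "Amat K b z y = (if z = y then Bsum K b (level z)
                   else if Ivl z \<subset> Ivl y then - b (level z) else 0)"

definition coherent_among :: "nat \<Rightarrow> nat set \<Rightarrow> (nat \<times> nat \<Rightarrow> real) \<Rightarrow> bool" where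
  "coherent_among K L \<mu> \<longleftrightarrow>
     (\<forall>k \<in> L. \<forall>m \<in> L. k < m \<longrightarrow>
        (\<forall>z \<in> lvl_nodes K k. \<mu> z = (\<Sum>u \<in> {u \<in> lvl_nodes K m. Ivl u \<subseteq> Ivl z}. \<mu> u)))"

end

theory Submission
  imports Defs
begin

text \<open>Below level l the perturbation t a_y only shifts the potentials of the nodes strictly
  inside I_y, all by the same amount -t b_k. Hence at every level k > l the new prices are
  the old ones multiplied by a factor g (e^-t inside I_y, 1 outside) and renormalized. Since
  g is constant on each subtree rooted at level k > level y, multiplying by g preserves
  coherence, and coherent vectors have equal level sums, so the renormalization divides
  every level by the same constant.\<close>

lemma lvl_nodes_iff: "w \<in> lvl_nodes K k \<longleftrightarrow> (\<exists>j. w = (k, j) \<and> k \<le> K \<and> j < 2 ^ k)"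
  unfolding lvl_nodes_def nodes_def level_def by auto

lemma level_lvl_nodes: "w \<in> lvl_nodes K k \<Longrightarrow> level w = k"
  by (simp add: lvl_nodes_def)

lemma finite_lvl_nodes: "finite (lvl_nodes K k)"
proof -
  have "lvl_nodes K k \<subseteq> {..K} \<times> {..<2 ^ K}"
    unfolding lvl_nodes_def nodes_def
    by (auto intro: less_le_trans[OF _ power_increasing[of _ K "2::nat"]])
  then show ?thesis by (rule finite_subset) auto
qed

lemma lvl_nodes_nonempty: "k \<le> K \<Longrightarrow> lvl_nodes K k \<noteq> {}"
  using lvl_nodes_iff[of "(k, 0)" K k] by auto

lemma Ivl_subset_iff:
  assumes "k \<le> m"
  shows "Ivl (m, j) \<subseteq> Ivl (k, i) \<longleftrightarrow> i = j div 2 ^ (m - k)"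
proof -
  define p :: nat where "p = 2 ^ (m - k)"
  have p0: "p > 0" by (simp add: p_def)
  have pm: "(2::real) ^ m = 2 ^ k * real p"
    using assms by (simp add: p_def power_add[symmetric])
  have "real j / 2 ^ m < (real j + 1) / 2 ^ m" by (simp add: divide_strict_right_mono)
  then have "Ivl (m, j) \<subseteq> Ivl (k, i) \<longleftrightarrow>
      real i / 2 ^ k \<le> real j / 2 ^ m \<and> (real j + 1) / 2 ^ m \<le> (real i + 1) / 2 ^ k"
    by (simp add: Ivl_def alpha_def beta_def)
  also have "\<dots> \<longleftrightarrow> real i * real p \<le> real j \<and> real j + 1 \<le> (real i + 1) * real p"
  proof -
    have "real i / 2 ^ k \<le> real j / (2 ^ k * real p) \<longleftrightarrow> real i * real p \<le> real j"
      using p0 by (simp add: field_simps)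
    moreover have "(real j + 1) / (2 ^ k * real p) \<le> (real i + 1) / 2 ^ k
        \<longleftrightarrow> real j + 1 \<le> (real i + 1) * real p"
      using p0 by (simp add: divide_le_eq le_divide_eq mult.commute mult.left_commute)
    ultimately show ?thesis unfolding pm by simp
  qed
  also have "\<dots> \<longleftrightarrow> i * p \<le> j \<and> j < (i + 1) * p"
    by (metis Suc_eq_plus1 Suc_le_eq of_nat_1 of_nat_add of_nat_le_iff of_nat_mult)
  also have "\<dots> \<longleftrightarrow> i = j div p"
    using p0 by (meson div_less_iff_less_mult le_antisym less_add_one
        less_eq_div_iff_mult_less_eq less_inc_imp_less_eq)
  finally show ?thesis by (simp add: p_def)
qed

lemma Ivl_eq_imp_level_eq: "Ivl (a, x) = Ivl (c, w) \<Longrightarrow> a = c"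
proof -
  assume eq: "Ivl (a, x) = Ivl (c, w)"
  have ne: "real n / 2 ^ q < (real n + 1) / 2 ^ q" for n q
    by (simp add: divide_strict_right_mono)
  have "alpha (a, x) = alpha (c, w) \<and> beta (a, x) = beta (c, w)"
    using eq ne[of x a] ne[of w c] unfolding Ivl_def
    by (simp add: alpha_def beta_def atLeastLessThan_eq_iff)
  moreover have "beta (q, n) - alpha (q, n) = 1 / 2 ^ q" for q n
    by (simp add: alpha_def beta_def diff_divide_distrib[symmetric])
  ultimately have "1 / (2::real) ^ a = 1 / 2 ^ c" by metis
  then show "a = c" by simp
qed

lemma Ivl_psubset_iff:
  assumes "k < m"
  shows "Ivl (m, j) \<subset> Ivl (k, i) \<longleftrightarrow> i = j div 2 ^ (m - k)"
  using Ivl_subset_iff[of k m j i] assms Ivl_eq_imp_level_eq[of m j k i] by auto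

lemma Ivl_psubset_descendant_iff:
  assumes "level y < level z" "level z \<le> level u" "Ivl u \<subseteq> Ivl z"
  shows "Ivl u \<subset> Ivl y \<longleftrightarrow> Ivl z \<subset> Ivl y"
proof -
  obtain m j k i ly jy where nodes: "u = (m, j)" "z = (k, i)" "y = (ly, jy)"
    by (cases u, cases z, cases y) auto
  have lev: "ly < k" "k \<le> m" using assms(1,2) nodes by (simp_all add: level_def)
  have i: "i = j div 2 ^ (m - k)"
    using Ivl_subset_iff[OF lev(2)] assms(3) nodes by simp
  have "(2::nat) ^ (m - ly) = 2 ^ (m - k) * 2 ^ (k - ly)"
    using lev by (simp add: power_add[symmetric])
  then have "j div 2 ^ (m - ly) = (j div 2 ^ (m - k)) div 2 ^ (k - ly)"
    by (simp add: div_mult2_eq)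
  then show ?thesis
    using Ivl_psubset_iff[of ly m j jy] Ivl_psubset_iff[of ly k i jy] lev i nodes by simp
qed

lemma sum_descendants_lvl_nodes:
  assumes "k \<le> m"
  shows "(\<Sum>z\<in>lvl_nodes K k. \<Sum>u\<in>{u \<in> lvl_nodes K m. Ivl u \<subseteq> Ivl z}. f u)
       = (\<Sum>u\<in>lvl_nodes K m. f u)"
proof -
  define parent where "parent u = (k, snd u div 2 ^ (m - k))" for u :: "nat \<times> nat"
  have "parent ` lvl_nodes K m \<subseteq> lvl_nodes K k"
  proof
    fix x assume "x \<in> parent ` lvl_nodes K m"
    then obtain j where j: "j < 2 ^ m" "m \<le> K" "x = (k, j div 2 ^ (m - k))"
      by (auto simp: lvl_nodes_iff parent_def)
    have "(2::nat) ^ m = 2 ^ k * 2 ^ (m - k)"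
      using assms by (simp add: power_add[symmetric])
    then have "j div 2 ^ (m - k) < 2 ^ k" using j(1) by (simp add: div_less_iff_less_mult)
    then show "x \<in> lvl_nodes K k" using j assms by (auto simp: lvl_nodes_iff)
  qed
  moreover have "Ivl u \<subseteq> Ivl z \<longleftrightarrow> parent u = z"
    if u: "u \<in> lvl_nodes K m" and z: "z \<in> lvl_nodes K k" for u z
  proof -
    obtain i j where "u = (m, j)" "z = (k, i)" using u z by (auto simp: lvl_nodes_iff)
    then show ?thesis using Ivl_subset_iff[OF assms] by (auto simp: parent_def)
  qed
  then have "{u \<in> lvl_nodes K m. Ivl u \<subseteq> Ivl z} = {u \<in> lvl_nodes K m. parent u = z}"
    if "z \<in> lvl_nodes K k" for z
    using that by blast
  ultimately show ?thesis
    by (simp add: sum.group[OF finite_lvl_nodes finite_lvl_nodes])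
qed

lemma coherent_among_cong:
  assumes "\<And>k z. k \<in> L \<Longrightarrow> z \<in> lvl_nodes K k \<Longrightarrow> \<mu> z = \<nu> z"
  shows "coherent_among K L \<mu> \<longleftrightarrow> coherent_among K L \<nu>"
proof -
  have sums: "(\<Sum>u\<in>{u \<in> lvl_nodes K m. P u}. \<mu> u) = (\<Sum>u\<in>{u \<in> lvl_nodes K m. P u}. \<nu> u)"
    if "m \<in> L" for m P
    using that assms by (intro sum.cong) auto
  show ?thesis
    unfolding coherent_among_def by (auto simp: assms sums)
qed

lemma coherent_among_sum_lvl_nodes_eq:
  assumes "coherent_among K L \<mu>" "k \<in> L" "m \<in> L"
  shows "(\<Sum>z\<in>lvl_nodes K k. \<mu> z) = (\<Sum>u\<in>lvl_nodes K m. \<mu> u)"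
proof -
  have "(\<Sum>z\<in>lvl_nodes K k. \<mu> z) = (\<Sum>u\<in>lvl_nodes K m. \<mu> u)" if "k \<in> L" "m \<in> L" "k < m" for k m
  proof -
    have "(\<Sum>z\<in>lvl_nodes K k. \<mu> z)
        = (\<Sum>z\<in>lvl_nodes K k. \<Sum>u\<in>{u \<in> lvl_nodes K m. Ivl u \<subseteq> Ivl z}. \<mu> u)"
      using assms(1) that unfolding coherent_among_def by (intro sum.cong) auto
    also have "\<dots> = (\<Sum>u\<in>lvl_nodes K m. \<mu> u)"
      using that by (intro sum_descendants_lvl_nodes) simp
    finally show ?thesis .
  qed
  then show ?thesis using assms(2,3) by (metis linorder_neqE_nat)
qed

lemma coherent_among_mult:
  assumes "coherent_among K L \<mu>"
    and "\<And>k m z u. k \<in> L \<Longrightarrow> m \<in> L \<Longrightarrow> k < m \<Longrightarrow> z \<in> lvl_nodes K k \<Longrightarrow>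
           u \<in> lvl_nodes K m \<Longrightarrow> Ivl u \<subseteq> Ivl z \<Longrightarrow> g u = g z"
  shows "coherent_among K L (\<lambda>z. \<mu> z * g z)"
  unfolding coherent_among_def
proof (intro ballI impI)
  fix k m z assume km: "k \<in> L" "m \<in> L" "k < m" and z: "z \<in> lvl_nodes K k"
  then have "\<mu> z = (\<Sum>u\<in>{u \<in> lvl_nodes K m. Ivl u \<subseteq> Ivl z}. \<mu> u)"
    using assms(1) unfolding coherent_among_def by blast
  then show "\<mu> z * g z = (\<Sum>u\<in>{u \<in> lvl_nodes K m. Ivl u \<subseteq> Ivl z}. \<mu> u * g u)"
    using assms(2)[OF km z] by (simp add: sum_distrib_right)
qed

lemma coherent_among_normalize:
  assumes "coherent_among K L \<mu>"
  shows "coherent_among K L (\<lambda>z. \<mu> z / (\<Sum>w\<in>lvl_nodes K (level z). \<mu> w))"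
  unfolding coherent_among_def
proof (intro ballI impI)
  fix k m z assume km: "k \<in> L" "m \<in> L" "k < m" and z: "z \<in> lvl_nodes K k"
  have "\<mu> z = (\<Sum>u\<in>{u \<in> lvl_nodes K m. Ivl u \<subseteq> Ivl z}. \<mu> u)"
    using assms km z unfolding coherent_among_def by blast
  moreover have "(\<Sum>w\<in>lvl_nodes K k. \<mu> w) = (\<Sum>w\<in>lvl_nodes K m. \<mu> w)"
    using coherent_among_sum_lvl_nodes_eq[OF assms km(1,2)] .
  ultimately show "\<mu> z / (\<Sum>w\<in>lvl_nodes K (level z). \<mu> w)
      = (\<Sum>u\<in>{u \<in> lvl_nodes K m. Ivl u \<subseteq> Ivl z}. \<mu> u / (\<Sum>w\<in>lvl_nodes K (level u). \<mu> w))"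
    using z by (simp add: level_lvl_nodes sum_divide_distrib) (intro sum.cong; auto simp: level_lvl_nodes)
qed

lemma ptil_tilt:
  assumes "k \<le> K" "w \<in> lvl_nodes K k"
    and tilt: "\<And>w. w \<in> lvl_nodes K k \<Longrightarrow> exp (\<theta>' w / b k) = exp (\<theta> w / b k) * g w"
  shows "ptil K b \<theta>' w = ptil K b \<theta> w * g w / (\<Sum>v\<in>lvl_nodes K k. ptil K b \<theta> v * g v)"
proof -
  define Z where "Z = (\<Sum>v\<in>lvl_nodes K k. exp (\<theta> v / b k))"
  have "Z > 0"
    unfolding Z_def using lvl_nodes_nonempty[OF assms(1)]
    by (intro sum_pos finite_lvl_nodes) auto
  have ptil_eq: "ptil K b \<theta> v = exp (\<theta> v / b k) / Z" if "v \<in> lvl_nodes K k" for v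
    using level_lvl_nodes[OF that] by (simp add: ptil_def Z_def)
  have "ptil K b \<theta>' w = exp (\<theta> w / b k) * g w / (\<Sum>v\<in>lvl_nodes K k. exp (\<theta> v / b k) * g v)"
    unfolding ptil_def level_lvl_nodes[OF assms(2)] using assms(2) tilt
    by (simp cong: sum.cong)
  also have "\<dots> = (exp (\<theta> w / b k) / Z) * g w / (\<Sum>v\<in>lvl_nodes K k. (exp (\<theta> v / b k) / Z) * g v)"
    using \<open>Z > 0\<close> by (simp add: sum_divide_distrib[symmetric])
  finally show ?thesis
    using assms(2) by (simp add: ptil_eq cong: sum.cong)
qed

lemma Amat_below:
  assumes "level y < level w"
  shows "Amat K b w y = (if Ivl w \<subset> Ivl y then - b (level w) else 0)"
  using assms by (auto simp: Amat_def)

theorem lemma2: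
  fixes K l :: nat and b :: "nat \<Rightarrow> real" and \<theta> :: "nat \<times> nat \<Rightarrow> real"
    and t :: real and y :: "nat \<times> nat"
  assumes "K \<ge> 1"
    and "\<forall>k \<le> K. b k > 0"
    and "l < K"
    and "coherent_among K {k. l < k \<and> k \<le> K} (ptil K b \<theta>)"
    and "y \<in> inner_nodes K"
    and "level y \<le> l"
  shows "coherent_among K {k. l < k \<and> k \<le> K}
           (ptil K b (\<lambda>z. \<theta> z + t * Amat K b z y))"
proof -
  define L where "L = {k. l < k \<and> k \<le> K}"
  define g where "g w = (if Ivl w \<subset> Ivl y then exp (- t) else 1)" for w
  define \<mu> where "\<mu> z = ptil K b \<theta> z * g z" for z
  have "coherent_among K L \<mu>"
    unfolding \<mu>_def L_def
  proof (rule coherent_among_mult[OF assms(4)])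
    fix k m z u assume "k \<in> {k. l < k \<and> k \<le> K}" "k < m"
      "z \<in> lvl_nodes K k" "u \<in> lvl_nodes K m" "Ivl u \<subseteq> Ivl z"
    then show "g u = g z"
      using assms(6) Ivl_psubset_descendant_iff[of y z u]
      by (simp add: g_def level_lvl_nodes)
  qed
  then have "coherent_among K L (\<lambda>z. \<mu> z / (\<Sum>w\<in>lvl_nodes K (level z). \<mu> w))"
    by (rule coherent_among_normalize)
  moreover have "ptil K b (\<lambda>z. \<theta> z + t * Amat K b z y) z
      = \<mu> z / (\<Sum>w\<in>lvl_nodes K (level z). \<mu> w)" if "k \<in> L" "z \<in> lvl_nodes K k" for k z
  proof -
    have "exp ((\<theta> w + t * Amat K b w y) / b k) = exp (\<theta> w / b k) * g w"
      if "w \<in> lvl_nodes K k" for w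
      using \<open>k \<in> L\<close> assms(2,6) level_lvl_nodes[OF that]
      by (auto simp: L_def Amat_below g_def add_divide_distrib mult_exp_exp)
    then show ?thesis
      using that level_lvl_nodes[OF that(2)] unfolding \<mu>_def L_def
      by (intro ptil_tilt) auto
  qed
  ultimately show ?thesis
    unfolding L_def by (subst coherent_among_cong) (auto simp: L_def)
qed

end
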